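(* In every finite three-player extensive-form game with perfect recall, $\Xi_T=\operatorname{co}\Xi^*_{T1}=\operatorname{co}\Xi^*_{T2}=\operatorname{co}(\Xi^*_{T1}\cup\Xi^*_{T2})$, where $\operatorname{co}$ denotes convex hull.
   Context: A finite extensive-form game is played on a tree; each internal node belongs to one of the players $T1,T2,O$ or to chance. The nodes of player $i$ are partitioned into information sets $\mathcal I_i$; all nodes of $I\in\mathcal I_i$ share the action set $A_I$. Perfect recall is assumed. The sequences of player $i$ are $\Sigma_i=\{(I,a):I\in\mathcal I_i,a\in A_I\}\cup\{\varnothing\}$. For an information set $I$ of player $i$, $\sigma(I)$ denotes the last pair $(I',a')$ of player $i$ on the root-to-$I$ path, or $\varnothing$ if $i$ does not act before $I$. Two information sets $I_i\in\mathcal I_i$, $I_j\in\mathcal I_j$ are connected ($I_i\rightleftharpoons I_j$) if there exist $v\in I_i$, $w\in I_j$ such that the root-to-$v$ path passes through $w$ or vice versa. A pair $(\sigma_i,\sigma_j)$ is relevant ($\sigma_i\bowtie\sigma_j$) if one of them is $\varnothing$ or $\sigma_i=(I_i,a_i)$, $\sigma_j=(I_j,a_j)$ with $I_i\rightleftharpoons I_j$; $\Sigma_{T1}\bowtie\Sigma_{T2}$ is the set of relevant pairs. Similarly $\sigma_i\bowtie I_j$ if $\sigma_i=\varnothing$ or $\sigma_i=(I_i,a_i)$ with $I_i\rightleftharpoons I_j$. A reduced-normal-form plan of player $i$ chooses an action at every information set of $i$ that remains reachable given the plan's own choices; their set is $\Pi_i$. For $\sigma=(I,a)$, $\Pi_i(\sigma)$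 is the set of plans prescribing all of $i$'s actions on the path to $I$ and playing $a$ at $I$; $\Pi_i(\varnothing)=\Pi_i$. The map $f$ sends $\mu_T\in\Delta(\Pi_{T1}\times\Pi_{T2})$ to the vector $f(\mu_T)$ indexed by relevant pairs with $f(\mu_T)[\sigma_{T1},\sigma_{T2}]=\sum_{\pi_1\in\Pi_{T1}(\sigma_{T1}),\pi_2\in\Pi_{T2}(\sigma_{T2})}\mu_T(\pi_1,\pi_2)$; $\Xi_T=f(\Delta(\Pi_{T1}\times\Pi_{T2}))$. The von Stengel–Forges polytope $\mathcal V_T$ is the set of nonnegative vectors $\xi$ indexed by relevant pairs with: $\xi[\varnothing,\varnothing]=1$; $\sum_{a\in A_{I}}\xi[(I,a),\sigma_{T2}]=\xi[\sigma(I),\sigma_{T2}]$ for all $I\in\mathcal I_{T1}$, $\sigma_{T2}\in\Sigma_{T2}$ with $I\bowtie\sigma_{T2}$; $\sum_{b\in A_{J}}\xi[\sigma_{T1},(J,b)]=\xi[\sigma_{T1},\sigma(J)]$ for all $J\in\mathcal I_{T2}$, $\sigma_{T1}\in\Sigma_{T1}$ with $\sigma_{T1}\bowtie J$. The semi-randomized correlation plans are $\Xi^*_{T1}=\{\xi\in\mathcal V_T:\xi[\varnothing,\sigma_{T2}]\in\{0,1\}\ \forall\sigma_{T2}\in\Sigma_{T2}\}$ and $\Xi^*_{T2}=\{\xi\in\mathcal V_T:\xi[\sigma_{T1},\varnothing]\in\{0,1\}\ \forall\sigma_{T1}\in\Sigma_{T1}\}$. *)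

theory Defs
  imports "HOL-Analysis.Analysis" "HOL-Library.Sublist"
begin

datatype player = T1 | T2 | O | Chance

text \<open>A game tree is given by its set of histories (nodes = finite sequences of
action labels, the root is the empty history, ancestor = prefix), the owner of
each internal node and an information-set label for each node. The
information sets of player i are the labels I together with the node set
{h internal. owner h = i, infoset h = I}. Payoffs and chance probabilities
play no role in the statement and are omitted.\<close>

record ('a, 'i) efg =
  hist :: "'a list set"
  owner :: "'a list \<Rightarrow> player"
  infoset :: "'a list \<Rightarrow> 'i"

definition internal :: "('a, 'i) efg \<Rightarrow> 'a list \<Rightarrow> bool" where
  "internal g h \<longleftrightarrow> h \<in> hist g \<and> (\<exists>a. h @ [a] \<in> hist g)"

definition acts :: "('a, 'i) efg \<Rightarrow> 'a list \<Rightarrow> 'a set" where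
  "acts g h = {a. h @ [a] \<in> hist g}"

definition isnodes :: "('a, 'i) efg \<Rightarrow> player \<Rightarrow> 'i \<Rightarrow> 'a list set" where
  "isnodes g i I = {h. internal g h \<and> owner g h = i \<and> infoset g h = I}"

definition infosets :: "('a, 'i) efg \<Rightarrow> player \<Rightarrow> 'i set" where
  "infosets g i = {infoset g h | h. internal g h \<and> owner g h = i}"

definition seqpath :: "('a, 'i) efg \<Rightarrow> player \<Rightarrow> 'a list \<Rightarrow> ('i \<times> 'a) list" where
  "seqpath g i h =
     map (\<lambda>k. (infoset g (take k h), h ! k)) (filter (\<lambda>k. owner g (take k h) = i) [0..<length h])"

definition wf_game :: "('a, 'i) efg \<Rightarrow> bool" where
  "wf_game g \<longleftrightarrow>
     finite (hist g) \<and> [] \<in> hist g \<and>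
     (\<forall>h \<in> hist g. \<forall>p. prefix p h \<longrightarrow> p \<in> hist g) \<and>
     (\<forall>i h h'. i \<noteq> Chance \<and> h \<in> isnodes g i (infoset g h) \<and> h' \<in> isnodes g i (infoset g h)
        \<longrightarrow> acts g h = acts g h')"

definition perfect_recall :: "('a, 'i) efg \<Rightarrow> bool" where
  "perfect_recall g \<longleftrightarrow>
     (\<forall>i I h h'. i \<noteq> Chance \<and> h \<in> isnodes g i I \<and> h' \<in> isnodes g i I
        \<longrightarrow> seqpath g i h = seqpath g i h')"

definition rep :: "('a, 'i) efg \<Rightarrow> player \<Rightarrow> 'i \<Rightarrow> 'a list" where
  "rep g i I = (SOME h. h \<in> isnodes g i I)"

definition acts_is :: "('a, 'i) efg \<Rightarrow> player \<Rightarrow> 'i \<Rightarrow> 'a set" where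
  "acts_is g i I = acts g (rep g i I)"

definition pathseq :: "('a, 'i) efg \<Rightarrow> player \<Rightarrow> 'i \<Rightarrow> ('i \<times> 'a) list" where
  "pathseq g i I = seqpath g i (rep g i I)"

text \<open>sigma(I); the empty sequence is represented by None.\<close>
definition parseq :: "('a, 'i) efg \<Rightarrow> player \<Rightarrow> 'i \<Rightarrow> ('i \<times> 'a) option" where
  "parseq g i I = (if pathseq g i I = [] then None else Some (last (pathseq g i I)))"

definition seqs :: "('a, 'i) efg \<Rightarrow> player \<Rightarrow> ('i \<times> 'a) option set" where
  "seqs g i = insert None {Some (I, a) | I a. I \<in> infosets g i \<and> a \<in> acts_is g i I}"

definition connected :: "('a, 'i) efg \<Rightarrow> 'i \<Rightarrow> 'i \<Rightarrow> bool" where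
  "connected g I J \<longleftrightarrow>
     (\<exists>v w. v \<in> isnodes g T1 I \<and> w \<in> isnodes g T2 J \<and> (prefix w v \<or> prefix v w))"

definition relevant :: "('a, 'i) efg \<Rightarrow> ('i \<times> 'a) option \<Rightarrow> ('i \<times> 'a) option \<Rightarrow> bool" where
  "relevant g s1 s2 \<longleftrightarrow> s1 = None \<or> s2 = None \<or>
     (\<exists>I a J b. s1 = Some (I, a) \<and> s2 = Some (J, b) \<and> connected g I J)"

definition relpairs :: "('a, 'i) efg \<Rightarrow> (('i \<times> 'a) option \<times> ('i \<times> 'a) option) set" where
  "relpairs g = {(s1, s2). s1 \<in> seqs g T1 \<and> s2 \<in> seqs g T2 \<and> relevant g s1 s2}"

definition rel_seq_is :: "('a, 'i) efg \<Rightarrow> ('i \<times> 'a) option \<Rightarrow> 'i \<Rightarrow> bool" where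
  "rel_seq_is g s1 J \<longleftrightarrow> s1 = None \<or> (\<exists>I a. s1 = Some (I, a) \<and> connected g I J)"

definition rel_is_seq :: "('a, 'i) efg \<Rightarrow> 'i \<Rightarrow> ('i \<times> 'a) option \<Rightarrow> bool" where
  "rel_is_seq g I s2 \<longleftrightarrow> s2 = None \<or> (\<exists>J b. s2 = Some (J, b) \<and> connected g I J)"

text \<open>A plan is a partial map from information sets to actions, defined exactly at
the information sets that remain reachable given the plan's own choices.\<close>
type_synonym ('i, 'a) plan = "'i \<Rightarrow> 'a option"

definition prescribes_path :: "('a, 'i) efg \<Rightarrow> player \<Rightarrow> ('i, 'a) plan \<Rightarrow> 'i \<Rightarrow> bool" where
  "prescribes_path g i \<pi> I \<longleftrightarrow> (\<forall>(J, b) \<in> set (pathseq g i I). \<pi> J = Some b)"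

definition rnf_plans :: "('a, 'i) efg \<Rightarrow> player \<Rightarrow> ('i, 'a) plan set" where
  "rnf_plans g i = {\<pi>. (\<forall>I. \<pi> I \<noteq> None \<longrightarrow> I \<in> infosets g i) \<and>
      (\<forall>I \<in> infosets g i. (\<pi> I \<noteq> None \<longleftrightarrow> prescribes_path g i \<pi> I) \<and>
                          (\<forall>a. \<pi> I = Some a \<longrightarrow> a \<in> acts_is g i I))}"

definition plans_of :: "('a, 'i) efg \<Rightarrow> player \<Rightarrow> ('i \<times> 'a) option \<Rightarrow> ('i, 'a) plan set" where
  "plans_of g i s = (case s of None \<Rightarrow> rnf_plans g i
     | Some (I, a) \<Rightarrow> {\<pi> \<in> rnf_plans g i. prescribes_path g i \<pi> I \<and> \<pi> I = Some a})"

text \<open>Vectors indexed by relevant pairs are represented as real functions on all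
pairs of sequences that vanish outside the relevant pairs.\<close>
type_synonym ('i, 'a) cvec = "('i \<times> 'a) option \<times> ('i \<times> 'a) option \<Rightarrow> real"

definition Delta_T :: "('a, 'i) efg \<Rightarrow> (('i, 'a) plan \<times> ('i, 'a) plan \<Rightarrow> real) set" where
  "Delta_T g = {\<mu>. (\<forall>x. 0 \<le> \<mu> x) \<and> (\<forall>x. x \<notin> rnf_plans g T1 \<times> rnf_plans g T2 \<longrightarrow> \<mu> x = 0) \<and>
                   (\<Sum>x \<in> rnf_plans g T1 \<times> rnf_plans g T2. \<mu> x) = 1}"

definition fmap :: "('a, 'i) efg \<Rightarrow> (('i, 'a) plan \<times> ('i, 'a) plan \<Rightarrow> real) \<Rightarrow> ('i, 'a) cvec" where
  "fmap g \<mu> = (\<lambda>(s1, s2). if (s1, s2) \<in> relpairs g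
      then (\<Sum>\<pi>1 \<in> plans_of g T1 s1. \<Sum>\<pi>2 \<in> plans_of g T2 s2. \<mu> (\<pi>1, \<pi>2)) else 0)"

definition Xi_T :: "('a, 'i) efg \<Rightarrow> ('i, 'a) cvec set" where
  "Xi_T g = fmap g ` Delta_T g"

definition VSF :: "('a, 'i) efg \<Rightarrow> ('i, 'a) cvec set" where
  "VSF g = {\<xi>. (\<forall>p. p \<notin> relpairs g \<longrightarrow> \<xi> p = 0) \<and> (\<forall>p \<in> relpairs g. 0 \<le> \<xi> p) \<and>
     \<xi> (None, None) = 1 \<and>
     (\<forall>I \<in> infosets g T1. \<forall>s2 \<in> seqs g T2. rel_is_seq g I s2 \<longrightarrow>
        (\<Sum>a \<in> acts_is g T1 I. \<xi> (Some (I, a), s2)) = \<xi> (parseq g T1 I, s2)) \<and>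
     (\<forall>J \<in> infosets g T2. \<forall>s1 \<in> seqs g T1. rel_seq_is g s1 J \<longrightarrow>
        (\<Sum>b \<in> acts_is g T2 J. \<xi> (s1, Some (J, b))) = \<xi> (s1, parseq g T2 J))}"

definition Xi_star_T1 :: "('a, 'i) efg \<Rightarrow> ('i, 'a) cvec set" where
  "Xi_star_T1 g = {\<xi> \<in> VSF g. \<forall>s2 \<in> seqs g T2. \<xi> (None, s2) \<in> {0, 1}}"

definition Xi_star_T2 :: "('a, 'i) efg \<Rightarrow> ('i, 'a) cvec set" where
  "Xi_star_T2 g = {\<xi> \<in> VSF g. \<forall>s1 \<in> seqs g T1. \<xi> (s1, None) \<in> {0, 1}}"

definition conv :: "('x \<Rightarrow> real) set \<Rightarrow> ('x \<Rightarrow> real) set" where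
  "conv S = {x. \<exists>k c p. (\<forall>j<(k::nat). 0 \<le> (c j :: real) \<and> p j \<in> S) \<and>
               (\<Sum>j<k. c j) = 1 \<and> x = (\<lambda>q. \<Sum>j<k. c j * p j q)}"

end

theory Submission
  imports Defs
begin

text \<open>
  The map f is linear, so \<Xi>_T is convex and is the convex hull of the images of the point
  masses on pairs of plans (\<pi>1, \<pi>2). Such an image is the product of the two pure
  realization plans of \<pi>1 and \<pi>2, hence lies in both \<Xi>*_T1 and \<Xi>*_T2.

  Conversely, let \<xi> \<in> \<Xi>*_T1, so that its marginal \<xi>[\<emptyset>, -] is a pure realization plan of T2.
  Going up the tree of T2, the von Stengel--Forges constraints force \<xi>[\<sigma>1, \<sigma>2] = 0 whenever
  \<xi>[\<emptyset>, \<sigma>2] = 0, and \<xi>[\<sigma>1, \<sigma>2] = \<xi>[\<sigma>1, \<emptyset>] whenever \<xi>[\<emptyset>, \<sigma>2] = 1: \<xi> is the product of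
  its two marginals. Writing each marginal as a mixture of reduced-normal-form plans (Kuhn's
  theorem for realization plans), \<xi> is the image of the product of the two mixtures. The same
  holds for \<Xi>*_T2, so co(\<Xi>*_T1 \<union> \<Xi>*_T2) \<subseteq> \<Xi>_T \<subseteq> co(\<Xi>*_T1 \<inter> \<Xi>*_T2).
\<close>

lemma sum_nonneg_eq_member_imp_zero:
  fixes f :: "'b \<Rightarrow> real"
  assumes "finite A" "\<And>c. c \<in> A \<Longrightarrow> 0 \<le> f c" "b \<in> A" "sum f A = f b" "c \<in> A" "c \<noteq> b"
  shows "f c = 0"
proof -
  have "sum f (A - {b}) = 0" using sum.remove[OF assms(1,3), of f] assms(4) by simp
  then show ?thesis using sum_nonneg_eq_0_iff[of "A - {b}" f] assms by auto
qed

section \<open>Information sets of a perfect-recall game\<close>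

lemma seqpath_take:
  assumes "k \<le> length h"
  shows "seqpath g i (take k h) =
    map (\<lambda>j. (infoset g (take j h), h ! j)) (filter (\<lambda>j. owner g (take j h) = i) [0..<k])"
proof -
  have "filter (\<lambda>j. owner g (take j (take k h)) = i) [0..<k] = filter (\<lambda>j. owner g (take j h) = i) [0..<k]"
    by (rule filter_cong) (auto simp: min_def)
  then show ?thesis
    unfolding seqpath_def using assms by (auto simp: min_def intro!: map_cong)
qed

lemma seqpath_snoc_last:
  assumes "seqpath g i h \<noteq> []"
  obtains k where "k < length h" "owner g (take k h) = i"
    "seqpath g i h = seqpath g i (take k h) @ [(infoset g (take k h), h ! k)]"
proof -
  let ?P = "\<lambda>j. owner g (take j h) = i"
  let ?S = "{j. j < length h \<and> ?P j}"
  have "?S \<noteq> {}" using assms by (auto simp: seqpath_def filter_empty_conv)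
  moreover have "finite ?S" by simp
  ultimately obtain k where k: "k \<in> ?S" and kmax: "\<And>j. j \<in> ?S \<Longrightarrow> j \<le> k"
    using Max_in Max_ge by blast
  have later: "filter ?P [Suc k..<length h] = []"
    using kmax by (fastforce simp: filter_empty_conv)
  have "[0..<length h] = [0..<k] @ k # [Suc k..<length h]"
    using k upt_add_eq_append[of 0 k "length h - k"] by (simp add: upt_conv_Cons)
  then have "seqpath g i h = map (\<lambda>j. (infoset g (take j h), h ! j)) (filter ?P [0..<k])
      @ [(infoset g (take k h), h ! k)]"
    using k later by (simp add: seqpath_def)
  also have "\<dots> = seqpath g i (take k h) @ [(infoset g (take k h), h ! k)]"
    using k by (simp add: seqpath_take)
  finally show ?thesis using k that by blast
qed

locale game =
  fixes g :: "('a, 'i) efg"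
  assumes wf: "wf_game g"
begin

lemma hist_prefix_closed: "h \<in> hist g \<Longrightarrow> prefix p h \<Longrightarrow> p \<in> hist g"
  using wf unfolding wf_game_def by blast

lemma finite_hist: "finite (hist g)"
  using wf unfolding wf_game_def by blast

lemma finite_acts: "finite (acts g h)"
proof -
  have "acts g h = (\<lambda>a. h @ [a]) -` hist g" by (auto simp: acts_def)
  then show ?thesis using finite_hist by (simp add: finite_vimageI inj_on_def)
qed

lemma finite_acts_is: "finite (acts_is g i I)"
  by (simp add: acts_is_def finite_acts)

lemma finite_infosets: "finite (infosets g i)"
proof -
  have "infosets g i \<subseteq> infoset g ` hist g" by (auto simp: infosets_def internal_def)
  then show ?thesis using finite_hist finite_surj by blast
qed

lemma finite_seqs: "finite (seqs g i)"
proof -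
  have "seqs g i = insert None ((\<lambda>(I, a). Some (I, a)) ` (SIGMA I:infosets g i. acts_is g i I))"
    by (auto simp: seqs_def)
  then show ?thesis by (simp add: finite_infosets finite_acts_is)
qed

lemma finite_rnf_plans: "finite (rnf_plans g i)"
proof -
  let ?A = "infosets g i" and ?B = "\<Union>I\<in>infosets g i. acts_is g i I"
  let ?F = "{m. \<forall>I. (I \<in> ?A \<longrightarrow> m I \<in> insert None (Some ` ?B)) \<and> (I \<notin> ?A \<longrightarrow> m I = None)}"
  have "rnf_plans g i \<subseteq> ?F"
    by (force simp: rnf_plans_def)
  moreover have "finite ?F"
    by (rule finite_set_of_finite_funs) (simp_all add: finite_infosets finite_acts_is)
  ultimately show ?thesis by (rule finite_subset)
qed

lemma plans_of_subset: "plans_of g i s \<subseteq> rnf_plans g i"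
  by (auto simp: plans_of_def split: option.splits)

lemma finite_plans_of: "finite (plans_of g i s)"
  using finite_subset[OF plans_of_subset finite_rnf_plans] .

lemma infosets_iff_isnodes: "I \<in> infosets g i \<longleftrightarrow> isnodes g i I \<noteq> {}"
  by (auto simp: infosets_def isnodes_def)

lemma rep_in_isnodes: "I \<in> infosets g i \<Longrightarrow> rep g i I \<in> isnodes g i I"
  unfolding rep_def by (rule someI_ex) (auto simp: infosets_iff_isnodes)

lemma acts_is_nonempty: "I \<in> infosets g i \<Longrightarrow> acts_is g i I \<noteq> {}"
  using rep_in_isnodes by (auto simp: acts_is_def acts_def isnodes_def internal_def)

lemma acts_eq_acts_is:
  assumes "i \<noteq> Chance" "v \<in> isnodes g i I"
  shows "acts g v = acts_is g i I"
proof -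
  have "rep g i I \<in> isnodes g i I" "infoset g v = I"
    using assms rep_in_isnodes infosets_iff_isnodes by (auto simp: isnodes_def)
  then show ?thesis unfolding acts_is_def using wf assms unfolding wf_game_def by metis
qed

lemma isnodes_take:
  assumes "v \<in> hist g" "k < length v" "owner g (take k v) = i"
  shows "take k v \<in> isnodes g i (infoset g (take k v))" "v ! k \<in> acts g (take k v)"
proof -
  have "take k v @ [v ! k] \<in> hist g"
    using assms hist_prefix_closed take_is_prefix by (metis take_Suc_conv_app_nth)
  moreover have "take k v \<in> hist g" using assms hist_prefix_closed take_is_prefix by blast
  ultimately show "take k v \<in> isnodes g i (infoset g (take k v))" "v ! k \<in> acts g (take k v)"
    using assms by (auto simp: isnodes_def internal_def acts_def)
qed

end

locale perfect_recall_game = game +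
  assumes pr: "perfect_recall g"
begin

lemma seqpath_eq_pathseq:
  assumes "i \<noteq> Chance" "v \<in> isnodes g i I"
  shows "seqpath g i v = pathseq g i I"
  using pr assms rep_in_isnodes[of I i] infosets_iff_isnodes
  unfolding perfect_recall_def pathseq_def by blast

lemma parseq_SomeD:
  assumes "i \<noteq> Chance" "I \<in> infosets g i" "parseq g i I = Some (I', a')"
  shows "I' \<in> infosets g i" "a' \<in> acts_is g i I'" "pathseq g i I = pathseq g i I' @ [(I', a')]"
    and "v \<in> isnodes g i I \<Longrightarrow> \<exists>v'. v' \<in> isnodes g i I' \<and> prefix v' v"
proof -
  have ne: "pathseq g i I \<noteq> []" and last: "last (pathseq g i I) = (I', a')"
    using assms(3) by (auto simp: parseq_def split: if_splits)
  have parent: "\<exists>v'. prefix v' v \<and> v' \<in> isnodes g i I' \<and> a' \<in> acts_is g i I' \<and>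
      pathseq g i I = pathseq g i I' @ [(I', a')]" if v: "v \<in> isnodes g i I" for v
  proof -
    have path: "seqpath g i v = pathseq g i I" using seqpath_eq_pathseq assms(1) v .
    then obtain k where k: "k < length v" "owner g (take k v) = i"
      "pathseq g i I = seqpath g i (take k v) @ [(infoset g (take k v), v ! k)]"
      using seqpath_snoc_last[of g i v] ne by auto
    have "v \<in> hist g" using v by (simp add: isnodes_def internal_def)
    then have "take k v \<in> isnodes g i (infoset g (take k v))" "v ! k \<in> acts g (take k v)"
      using isnodes_take k by blast+
    moreover have "infoset g (take k v) = I'" "v ! k = a'" using k(3) last by auto
    ultimately show ?thesis
      using k(3) assms(1) seqpath_eq_pathseq acts_eq_acts_is by (metis take_is_prefix)
  qed
  then show "v \<in> isnodes g i I \<Longrightarrow> \<exists>v'. v' \<in> isnodes g i I' \<and> prefix v' v" by blast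
  from parent[OF rep_in_isnodes[OF assms(2)]] show "a' \<in> acts_is g i I'"
    "pathseq g i I = pathseq g i I' @ [(I', a')]" "I' \<in> infosets g i"
    using infosets_iff_isnodes by blast+
qed

lemma parseq_cases:
  assumes "i \<noteq> Chance" "I \<in> infosets g i"
  obtains "parseq g i I = None"
  | I' a' where "parseq g i I = Some (I', a')" "I' \<in> infosets g i" "a' \<in> acts_is g i I'"
  using parseq_SomeD[OF assms] by (cases "parseq g i I") auto

lemma infoset_induct [consumes 2, case_names parseq]:
  assumes "i \<noteq> Chance" "I \<in> infosets g i"
    and step: "\<And>I. I \<in> infosets g i \<Longrightarrow> (\<And>I' a'. parseq g i I = Some (I', a') \<Longrightarrow> P I') \<Longrightarrow> P I"
  shows "P I"
  using assms(2)
proof (induction "length (pathseq g i I)" arbitrary: I rule: less_induct)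
  case less
  show ?case
  proof (rule step[OF less.prems])
    fix I' a' assume "parseq g i I = Some (I', a')"
    then show "P I'" using parseq_SomeD[OF assms(1) less.prems] by (intro less.hyps) auto
  qed
qed

end

section \<open>Realization plans\<close>

text \<open>
  The sequence-form constraints of player i, imposed only at the information sets in R and
  without the normalisation x None = 1. For a fixed sequence s2 of T2, the column \<xi>(-, s2) of a
  point \<xi> of the von Stengel--Forges polytope satisfies them at the information sets of T1 that
  are relevant to s2.
\<close>
definition realization_on :: "('a, 'i) efg \<Rightarrow> player \<Rightarrow> 'i set \<Rightarrow> (('i \<times> 'a) option \<Rightarrow> real) \<Rightarrow> bool" where
  "realization_on g i R x \<longleftrightarrow>
     (\<forall>I\<in>R. \<forall>a\<in>acts_is g i I. 0 \<le> x (Some (I, a))) \<and>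
     (\<forall>I\<in>R. (\<Sum>a\<in>acts_is g i I. x (Some (I, a))) = x (parseq g i I))"

definition parseq_closed :: "('a, 'i) efg \<Rightarrow> player \<Rightarrow> 'i set \<Rightarrow> bool" where
  "parseq_closed g i R \<longleftrightarrow>
     R \<subseteq> infosets g i \<and> (\<forall>I\<in>R. \<forall>I' a'. parseq g i I = Some (I', a') \<longrightarrow> I' \<in> R)"

context perfect_recall_game
begin

lemma parseq_closed_infosets: "i \<noteq> Chance \<Longrightarrow> parseq_closed g i (infosets g i)"
  using parseq_SomeD(1) by (auto simp: parseq_closed_def)

lemma realization_on_nonneg:
  assumes "realization_on g i (infosets g i) x" "0 \<le> x None" "s \<in> seqs g i"
  shows "0 \<le> x s"
  using assms by (auto simp: seqs_def realization_on_def)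

lemma realization_on_le_parseq:
  assumes "realization_on g i R x" "I \<in> R" "a \<in> acts_is g i I"
  shows "x (Some (I, a)) \<le> x (parseq g i I)"
proof -
  have "x (Some (I, a)) \<le> (\<Sum>a\<in>acts_is g i I. x (Some (I, a)))"
    using assms by (intro member_le_sum) (auto simp: realization_on_def finite_acts_is)
  then show ?thesis using assms by (simp add: realization_on_def)
qed

lemma realization_on_le_root:
  assumes "i \<noteq> Chance" "parseq_closed g i R" "realization_on g i R x" "I \<in> R" "a \<in> acts_is g i I"
  shows "x (Some (I, a)) \<le> x None"
proof -
  have "I \<in> infosets g i" using assms by (auto simp: parseq_closed_def)
  with assms(1) show ?thesis using assms(4,5)
  proof (induction arbitrary: a rule: infoset_induct)
    case (parseq I)
    have "x (parseq g i I) \<le> x None"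
    proof (cases rule: parseq_cases[OF assms(1) parseq(1)])
      case (2 I' a')
      then show ?thesis using parseq assms(2) by (simp add: parseq_closed_def)
    qed simp
    then show ?case using realization_on_le_parseq[OF assms(3) parseq(3,4)] by simp
  qed
qed

lemma realization_on_eq_zero:
  assumes "i \<noteq> Chance" "parseq_closed g i R" "realization_on g i R x" "x None = 0"
    and "I \<in> R" "a \<in> acts_is g i I"
  shows "x (Some (I, a)) = 0"
  using realization_on_le_root[OF assms(1-3,5,6)] assms unfolding realization_on_def by force

text \<open>
  If y puts full mass on (J, b), then the siblings of (J, b) and of all its ancestors carry
  y-mass 0, hence z-mass 0; so z does not change along the path from the root to (J, b).
\<close>
lemma realization_on_eq_root_of_full_mass:
  assumes "i \<noteq> Chance" and y: "realization_on g i (infosets g i) y" "y None = 1"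
    and R: "parseq_closed g i R" and z: "realization_on g i R z"
    and dominated: "\<And>I b. I \<in> R \<Longrightarrow> b \<in> acts_is g i I \<Longrightarrow> y (Some (I, b)) = 0 \<Longrightarrow> z (Some (I, b)) = 0"
    and "J \<in> R" "b \<in> acts_is g i J" "y (Some (J, b)) = 1"
  shows "z (Some (J, b)) = z None"
proof -
  have "J \<in> infosets g i" using R \<open>J \<in> R\<close> by (auto simp: parseq_closed_def)
  with assms(1) show ?thesis using assms(7-9)
  proof (induction arbitrary: b rule: infoset_induct)
    case (parseq J)
    have "y (parseq g i J) \<le> 1"
    proof (cases rule: parseq_cases[OF assms(1) parseq(1)])
      case (2 J' b')
      then show ?thesis
        using realization_on_le_root[OF assms(1) parseq_closed_infosets[OF assms(1)] y(1)] y(2) by simp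
    qed (simp add: y(2))
    then have y_parseq: "y (parseq g i J) = 1"
      using realization_on_le_parseq[OF y(1) parseq(1,4)] parseq(5) by simp
    have z_others: "z (Some (J, b')) = 0" if "b' \<in> acts_is g i J" "b' \<noteq> b" for b'
    proof (rule dominated[OF parseq(3) that(1)])
      show "y (Some (J, b')) = 0"
        using y(1) parseq y_parseq that
        by (intro sum_nonneg_eq_member_imp_zero[of "acts_is g i J" "\<lambda>c. y (Some (J, c))" b])
          (auto simp: realization_on_def finite_acts_is)
    qed
    have "z (Some (J, b)) = (\<Sum>c\<in>acts_is g i J. z (Some (J, c)))"
      using z_others parseq(4) by (simp add: sum.remove[OF finite_acts_is] sum.neutral)
    also have "\<dots> = z (parseq g i J)"
      using z parseq(3) by (simp add: realization_on_def)
    finally have z_parseq: "z (Some (J, b)) = z (parseq g i J)" .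
    show ?case
    proof (cases rule: parseq_cases[OF assms(1) parseq(1)])
      case (2 J' b')
      then show ?thesis
        using z_parseq parseq.IH R parseq(3) y_parseq
        by (simp add: parseq_closed_def)
    qed (use z_parseq in simp)
  qed
qed

lemma set_pathseq_subset:
  assumes "i \<noteq> Chance" "I \<in> infosets g i" "(J, b) \<in> set (pathseq g i I)"
  shows "J \<in> infosets g i \<and> set (pathseq g i J) \<subseteq> set (pathseq g i I)"
  using assms(1,2,3)
proof (induction rule: infoset_induct)
  case (parseq I)
  show ?case
  proof (cases rule: parseq_cases[OF assms(1) parseq(1)])
    case 1
    then show ?thesis using parseq(3) by (simp add: parseq_def split: if_splits)
  next
    case (2 I' a')
    then show ?thesis using parseq parseq_SomeD(3)[OF assms(1) parseq(1) 2(1)] by auto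
  qed
qed

end

section \<open>Mixtures of reduced-normal-form plans\<close>

definition plan_of_choice :: "('a, 'i) efg \<Rightarrow> player \<Rightarrow> ('i \<Rightarrow> 'a) \<Rightarrow> ('i, 'a) plan" where
  "plan_of_choice g i c I =
     (if I \<in> infosets g i \<and> (\<forall>(J, b)\<in>set (pathseq g i I). c J = b) then Some (c I) else None)"

context perfect_recall_game
begin

lemma plan_of_choice_in_rnf_plans:
  assumes "i \<noteq> Chance" "\<And>I. I \<in> infosets g i \<Longrightarrow> c I \<in> acts_is g i I"
  shows "plan_of_choice g i c \<in> rnf_plans g i"
proof -
  have "prescribes_path g i (plan_of_choice g i c) I \<longleftrightarrow> (\<forall>(J, b)\<in>set (pathseq g i I). c J = b)"
    if "I \<in> infosets g i" for I
    using set_pathseq_subset[OF assms(1) that]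
    by (fastforce simp: prescribes_path_def plan_of_choice_def split: if_splits)
  then show ?thesis
    using assms(2) by (auto simp: rnf_plans_def plan_of_choice_def split: if_splits)
qed

lemma plans_of_Some_iff: "\<pi> \<in> rnf_plans g i \<Longrightarrow> \<pi> \<in> plans_of g i (Some (I, a)) \<longleftrightarrow> \<pi> I = Some a"
  by (auto simp: plans_of_def rnf_plans_def)

lemma plans_of_parseq_iff:
  assumes "i \<noteq> Chance" "I \<in> infosets g i" "\<pi> \<in> rnf_plans g i"
  shows "\<pi> \<in> plans_of g i (parseq g i I) \<longleftrightarrow> \<pi> I \<noteq> None"
proof -
  have "\<pi> I \<noteq> None \<longleftrightarrow> prescribes_path g i \<pi> I" using assms(2,3) by (simp add: rnf_plans_def)
  moreover have "prescribes_path g i \<pi> I \<longleftrightarrow> \<pi> \<in> plans_of g i (parseq g i I)"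
  proof (cases rule: parseq_cases[OF assms(1,2)])
    case 1
    then show ?thesis using assms(3) by (simp add: parseq_def prescribes_path_def plans_of_def split: if_splits)
  next
    case (2 I' a')
    then show ?thesis
      using assms(3) parseq_SomeD(3)[OF assms(1,2) 2(1)] by (auto simp: prescribes_path_def plans_of_def)
  qed
  ultimately show ?thesis by simp
qed

lemma realization_on_plan_indicator:
  assumes "i \<noteq> Chance" "\<pi> \<in> rnf_plans g i"
  shows "realization_on g i (infosets g i) (\<lambda>s. of_bool (\<pi> \<in> plans_of g i s))"
  unfolding realization_on_def
proof (intro conjI ballI)
  fix I assume I: "I \<in> infosets g i"
  have "(\<Sum>a\<in>acts_is g i I. of_bool (\<pi> \<in> plans_of g i (Some (I, a)))) =
      (\<Sum>a\<in>acts_is g i I. of_bool (\<pi> I = Some a) :: real)"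
    using plans_of_Some_iff[OF assms(2)] by simp
  also have "\<dots> = of_bool (\<pi> I \<noteq> None)"
    using I assms(2) by (cases "\<pi> I") (auto simp: rnf_plans_def finite_acts_is)
  finally show "(\<Sum>a\<in>acts_is g i I. of_bool (\<pi> \<in> plans_of g i (Some (I, a)))) =
      (of_bool (\<pi> \<in> plans_of g i (parseq g i I)) :: real)"
    using plans_of_parseq_iff[OF assms(1) I assms(2)] by simp
qed simp

lemma plan_of_choice_pos:
  assumes "i \<noteq> Chance" "0 < x None"
    and c_pos: "\<And>I. I \<in> infosets g i \<Longrightarrow> 0 < x (parseq g i I) \<Longrightarrow> 0 < x (Some (I, c I))"
    and "plan_of_choice g i c I = Some a"
  shows "0 < x (Some (I, a))"
proof -
  have "I \<in> infosets g i" using assms(4) by (simp add: plan_of_choice_def split: if_splits)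
  with assms(1) show ?thesis using assms(4)
  proof (induction arbitrary: a rule: infoset_induct)
    case (parseq I)
    have a: "a = c I" and path: "\<forall>(J, b)\<in>set (pathseq g i I). c J = b"
      using parseq(3) by (simp_all add: plan_of_choice_def split: if_splits)
    have "0 < x (parseq g i I)"
    proof (cases rule: parseq_cases[OF assms(1) parseq(1)])
      case (2 I' a')
      then have "plan_of_choice g i c I' = Some a'"
        using path parseq_SomeD(3)[OF assms(1) parseq(1) 2(1)] by (auto simp: plan_of_choice_def)
      then show ?thesis using parseq.IH[OF 2(1)] 2(1) by simp
    qed (simp add: assms(2))
    then show ?case using c_pos[OF parseq(1)] a by simp
  qed
qed

lemma exists_plan_in_support:
  assumes "i \<noteq> Chance" and x: "realization_on g i (infosets g i) x" "0 < x None"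
  obtains \<pi> where "\<pi> \<in> rnf_plans g i" "\<And>I a. \<pi> I = Some a \<Longrightarrow> 0 < x (Some (I, a))"
proof -
  \<comment> \<open>c picks an action of positive weight wherever one exists; along a path that follows c
    every information set has positive incoming weight, so one always exists there.\<close>
  define good where "good I a \<longleftrightarrow> a \<in> acts_is g i I \<and>
      (0 < x (Some (I, a)) \<or> (\<forall>b\<in>acts_is g i I. x (Some (I, b)) \<le> 0))" for I a
  define c where "c I = (SOME a. good I a)" for I
  have c_good: "good I (c I)" if I: "I \<in> infosets g i" for I
  proof -
    obtain a where "a \<in> acts_is g i I" using acts_is_nonempty[OF I] by blast
    then have "\<exists>a. good I a" unfolding good_def by (metis not_le)
    then show ?thesis unfolding c_def by (rule someI_ex)
  qed
  have c_pos: "0 < x (Some (I, c I))" if "I \<in> infosets g i" "0 < x (parseq g i I)" for I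
  proof -
    have "0 < (\<Sum>b\<in>acts_is g i I. x (Some (I, b)))"
      using that x(1) by (simp add: realization_on_def)
    then have "\<not> (\<forall>b\<in>acts_is g i I. x (Some (I, b)) \<le> 0)"
      using sum_nonpos[of "acts_is g i I" "\<lambda>b. x (Some (I, b))"] by fastforce
    then show ?thesis using c_good[OF that(1)] unfolding good_def by blast
  qed
  have "plan_of_choice g i c \<in> rnf_plans g i"
    by (rule plan_of_choice_in_rnf_plans[OF assms(1)]) (use c_good in \<open>simp add: good_def\<close>)
  then show ?thesis using that plan_of_choice_pos[OF assms(1) x(2) c_pos] by blast
qed

lemma realization_on_diff:
  assumes "realization_on g i R x" "realization_on g i R y"
    and "\<And>I a. I \<in> R \<Longrightarrow> a \<in> acts_is g i I \<Longrightarrow> y (Some (I, a)) \<le> x (Some (I, a))"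
  shows "realization_on g i R (\<lambda>s. x s - y s)"
  using assms by (simp add: realization_on_def sum_subtractf)

lemma realization_on_scale:
  assumes "realization_on g i R y" "0 \<le> l"
  shows "realization_on g i R (\<lambda>s. l * y s)"
  using assms by (simp add: realization_on_def sum_distrib_left[symmetric])

lemma realization_on_peel_plan:
  assumes "i \<noteq> Chance" and x: "realization_on g i (infosets g i) x" "0 < x None"
  obtains \<pi> l where "\<pi> \<in> rnf_plans g i" "0 < l" "l \<le> x None"
    "realization_on g i (infosets g i) (\<lambda>s. x s - l * of_bool (\<pi> \<in> plans_of g i s))"
    "{s \<in> seqs g i. x s - l * of_bool (\<pi> \<in> plans_of g i s) \<noteq> 0} \<subset> {s \<in> seqs g i. x s \<noteq> 0}"
proof -
  obtain \<pi> where \<pi>: "\<pi> \<in> rnf_plans g i" "\<And>I a. \<pi> I = Some a \<Longrightarrow> 0 < x (Some (I, a))"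
    using exists_plan_in_support[OF assms] by blast
  let ?ind = "\<lambda>s. of_bool (\<pi> \<in> plans_of g i s) :: real"
  define S where "S = {s \<in> seqs g i. \<pi> \<in> plans_of g i s}"
  have None_S: "None \<in> S" using \<pi>(1) by (simp add: S_def seqs_def plans_of_def)
  have S_pos: "0 < x s" if "s \<in> S" for s
    using that x(2) \<pi> plans_of_Some_iff[OF \<pi>(1)] by (cases s) (auto simp: S_def)
  define l where "l = Min (x ` S)"
  have "finite S" by (simp add: S_def finite_seqs)
  then have "l \<in> x ` S" unfolding l_def using None_S by (intro Min_in) auto
  then obtain s0 where s0: "s0 \<in> S" "x s0 = l" by blast
  have l_le: "l \<le> x s" if "s \<in> S" for s
    unfolding l_def using \<open>finite S\<close> that by simp
  have "realization_on g i (infosets g i) (\<lambda>s. x s - l * ?ind s)"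
  proof (rule realization_on_diff[OF x(1) realization_on_scale])
    show "realization_on g i (infosets g i) ?ind" using realization_on_plan_indicator assms(1) \<pi>(1) .
    show "0 \<le> l" using S_pos s0 by force
    fix I a assume "I \<in> infosets g i" "a \<in> acts_is g i I"
    then show "l * ?ind (Some (I, a)) \<le> x (Some (I, a))"
      using x(1) l_le by (auto simp: realization_on_def S_def seqs_def)
  qed
  moreover have "{s \<in> seqs g i. x s - l * ?ind s \<noteq> 0} \<subset> {s \<in> seqs g i. x s \<noteq> 0}"
  proof
    show "{s \<in> seqs g i. x s - l * ?ind s \<noteq> 0} \<subseteq> {s \<in> seqs g i. x s \<noteq> 0}"
      using S_pos by (force simp: S_def)
    have "s0 \<in> seqs g i" "x s0 \<noteq> 0" "x s0 - l * ?ind s0 = 0"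
      using s0 S_pos[OF s0(1)] by (auto simp: S_def)
    then show "{s \<in> seqs g i. x s - l * ?ind s \<noteq> 0} \<noteq> {s \<in> seqs g i. x s \<noteq> 0}" by blast
  qed
  moreover have "0 < l" "l \<le> x None" using S_pos s0 l_le None_S by auto
  ultimately show ?thesis using that \<pi>(1) by blast
qed

text \<open>Induction on the size of the support, peeling off one plan at a time.\<close>
lemma realization_on_plan_mixture:
  assumes "i \<noteq> Chance" "realization_on g i (infosets g i) x" "0 \<le> x None"
  obtains p where "\<And>\<pi>. 0 \<le> p \<pi>" "\<And>\<pi>. \<pi> \<notin> rnf_plans g i \<Longrightarrow> p \<pi> = 0"
    "\<And>s. s \<in> seqs g i \<Longrightarrow> x s = (\<Sum>\<pi>\<in>plans_of g i s. p \<pi>)"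
proof -
  have "\<exists>p. (\<forall>\<pi>. 0 \<le> p \<pi>) \<and> (\<forall>\<pi>. \<pi> \<notin> rnf_plans g i \<longrightarrow> p \<pi> = 0) \<and>
      (\<forall>s\<in>seqs g i. x s = (\<Sum>\<pi>\<in>plans_of g i s. p \<pi>))"
    using assms(2,3)
  proof (induction "card {s \<in> seqs g i. x s \<noteq> 0}" arbitrary: x rule: less_induct)
    case less
    show ?case
    proof (cases "x None = 0")
      case True
      have "x s = 0" if "s \<in> seqs g i" for s
        using that realization_on_eq_zero[OF assms(1) parseq_closed_infosets[OF assms(1)] less.prems(1) True]
        by (auto simp: seqs_def True)
      then show ?thesis by (intro exI[of _ "\<lambda>_. 0"]) auto
    next
      case False
      then have "0 < x None" using less.prems(2) by simp
      then obtain \<pi> l where \<pi>: "\<pi> \<in> rnf_plans g i" "0 < l" "l \<le> x None"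
        and x': "realization_on g i (infosets g i) (\<lambda>s. x s - l * of_bool (\<pi> \<in> plans_of g i s))"
        and smaller: "{s \<in> seqs g i. x s - l * of_bool (\<pi> \<in> plans_of g i s) \<noteq> 0} \<subset> {s \<in> seqs g i. x s \<noteq> 0}"
        using realization_on_peel_plan[OF assms(1) less.prems(1)] by blast
      have nonneg: "0 \<le> x None - l * of_bool (\<pi> \<in> plans_of g i None)"
        using \<pi> by (simp add: plans_of_def)
      have fewer: "card {s \<in> seqs g i. x s - l * of_bool (\<pi> \<in> plans_of g i s) \<noteq> 0}
          < card {s \<in> seqs g i. x s \<noteq> 0}"
        using smaller by (rule psubset_card_mono[rotated]) (simp add: finite_seqs)
      obtain p where p: "\<forall>\<sigma>. 0 \<le> p \<sigma>" "\<forall>\<sigma>. \<sigma> \<notin> rnf_plans g i \<longrightarrow> p \<sigma> = 0"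
        "\<forall>s\<in>seqs g i. x s - l * of_bool (\<pi> \<in> plans_of g i s) = (\<Sum>\<sigma>\<in>plans_of g i s. p \<sigma>)"
        using less.hyps[OF fewer x' nonneg] by blast
      show ?thesis
      proof (intro exI[of _ "\<lambda>\<sigma>. p \<sigma> + (if \<sigma> = \<pi> then l else 0)"] conjI allI impI ballI)
        fix s assume "s \<in> seqs g i"
        then have "x s - l * of_bool (\<pi> \<in> plans_of g i s) = (\<Sum>\<sigma>\<in>plans_of g i s. p \<sigma>)"
          using p(3) by blast
        then show "x s = (\<Sum>\<sigma>\<in>plans_of g i s. p \<sigma> + (if \<sigma> = \<pi> then l else 0))"
          by (cases "\<pi> \<in> plans_of g i s") (simp_all add: sum.distrib finite_plans_of)
      next
        fix \<sigma> show "0 \<le> p \<sigma> + (if \<sigma> = \<pi> then l else 0)" using p(1) \<pi>(2) by simp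
      next
        fix \<sigma> assume "\<sigma> \<notin> rnf_plans g i"
        then show "p \<sigma> + (if \<sigma> = \<pi> then l else 0) = 0" using p(2) \<pi>(1) by auto
      qed
    qed
  qed
  then show ?thesis using that by blast
qed

end

section \<open>Semi-randomized correlation plans are products\<close>

context perfect_recall_game
begin

lemma connected_parseq_T1:
  assumes "connected g I J" "parseq g T1 I = Some (I', a')"
  shows "connected g I' J"
proof -
  obtain v w where vw: "v \<in> isnodes g T1 I" "w \<in> isnodes g T2 J" "prefix w v \<or> prefix v w"
    using assms(1) unfolding connected_def by blast
  have "I \<in> infosets g T1" using vw(1) infosets_iff_isnodes by blast
  then obtain v' where "v' \<in> isnodes g T1 I'" "prefix v' v"
    using parseq_SomeD(4)[OF _ _ assms(2) vw(1)] by auto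
  then show ?thesis
    using vw prefix_same_cases prefix_order.trans unfolding connected_def by metis
qed

lemma connected_parseq_T2:
  assumes "connected g I J" "parseq g T2 J = Some (J', b')"
  shows "connected g I J'"
proof -
  obtain v w where vw: "v \<in> isnodes g T1 I" "w \<in> isnodes g T2 J" "prefix w v \<or> prefix v w"
    using assms(1) unfolding connected_def by blast
  have "J \<in> infosets g T2" using vw(2) infosets_iff_isnodes by blast
  then obtain w' where "w' \<in> isnodes g T2 J'" "prefix w' w"
    using parseq_SomeD(4)[OF _ _ assms(2) vw(2)] by auto
  then show ?thesis
    using vw prefix_same_cases prefix_order.trans unfolding connected_def by metis
qed

lemma parseq_closed_rel_is_seq: "parseq_closed g T1 {I \<in> infosets g T1. rel_is_seq g I s2}"
  using parseq_SomeD(1)[of T1] connected_parseq_T1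
  by (fastforce simp: parseq_closed_def rel_is_seq_def)

lemma parseq_closed_rel_seq_is: "parseq_closed g T2 {J \<in> infosets g T2. rel_seq_is g s1 J}"
  using parseq_SomeD(1)[of T2] connected_parseq_T2
  by (fastforce simp: parseq_closed_def rel_seq_is_def)

lemma relpairs_Some_T1_iff:
  "(Some (I, a), s2) \<in> relpairs g \<longleftrightarrow>
     I \<in> infosets g T1 \<and> a \<in> acts_is g T1 I \<and> s2 \<in> seqs g T2 \<and> rel_is_seq g I s2"
  by (auto simp: relpairs_def relevant_def rel_is_seq_def seqs_def)

lemma relpairs_Some_T2_iff:
  "(s1, Some (J, b)) \<in> relpairs g \<longleftrightarrow>
     J \<in> infosets g T2 \<and> b \<in> acts_is g T2 J \<and> s1 \<in> seqs g T1 \<and> rel_seq_is g s1 J"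
  by (auto simp: relpairs_def relevant_def rel_seq_is_def seqs_def)

lemma relpairs_seqs: "(s1, s2) \<in> relpairs g \<Longrightarrow> s1 \<in> seqs g T1 \<and> s2 \<in> seqs g T2"
  by (simp add: relpairs_def)

lemma relpairs_None_iff: "(None, s2) \<in> relpairs g \<longleftrightarrow> s2 \<in> seqs g T2" "(s1, None) \<in> relpairs g \<longleftrightarrow> s1 \<in> seqs g T1"
  by (auto simp: relpairs_def relevant_def seqs_def)

lemma VSF_column_realization:
  assumes "\<xi> \<in> VSF g" "s2 \<in> seqs g T2"
  shows "realization_on g T1 {I \<in> infosets g T1. rel_is_seq g I s2} (\<lambda>s. \<xi> (s, s2))"
  using assms by (simp add: realization_on_def VSF_def relpairs_Some_T1_iff)

lemma VSF_row_realization: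
  assumes "\<xi> \<in> VSF g" "s1 \<in> seqs g T1"
  shows "realization_on g T2 {J \<in> infosets g T2. rel_seq_is g s1 J} (\<lambda>t. \<xi> (s1, t))"
  using assms by (simp add: realization_on_def VSF_def relpairs_Some_T2_iff)

lemma VSF_marginal_T1: "\<xi> \<in> VSF g \<Longrightarrow> realization_on g T1 (infosets g T1) (\<lambda>s. \<xi> (s, None))"
  using VSF_column_realization[of \<xi> None] by (simp add: rel_is_seq_def seqs_def)

lemma VSF_marginal_T2: "\<xi> \<in> VSF g \<Longrightarrow> realization_on g T2 (infosets g T2) (\<lambda>t. \<xi> (None, t))"
  using VSF_row_realization[of \<xi> None] by (simp add: rel_seq_is_def seqs_def)

lemma VSF_eq_zero_of_column_root:
  assumes "\<xi> \<in> VSF g" "(s1, s2) \<in> relpairs g" "\<xi> (None, s2) = 0"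
  shows "\<xi> (s1, s2) = 0"
proof (cases s1)
  case (Some Ia)
  then obtain I a where "s1 = Some (I, a)" by fastforce
  then show ?thesis
    using realization_on_eq_zero[OF _ parseq_closed_rel_is_seq VSF_column_realization, of \<xi> s2] assms
    by (simp add: relpairs_Some_T1_iff)
qed (use assms in simp)

lemma VSF_eq_zero_of_row_root:
  assumes "\<xi> \<in> VSF g" "(s1, s2) \<in> relpairs g" "\<xi> (s1, None) = 0"
  shows "\<xi> (s1, s2) = 0"
proof (cases s2)
  case (Some Jb)
  then obtain J b where "s2 = Some (J, b)" by fastforce
  then show ?thesis
    using realization_on_eq_zero[OF _ parseq_closed_rel_seq_is VSF_row_realization, of \<xi> s1] assms
    by (simp add: relpairs_Some_T2_iff)
qed (use assms in simp)

lemma VSF_eq_row_root_of_column_root_one: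
  assumes "\<xi> \<in> VSF g" "(s1, s2) \<in> relpairs g" "\<xi> (None, s2) = 1"
  shows "\<xi> (s1, s2) = \<xi> (s1, None)"
proof (cases s2)
  case (Some Jb)
  then obtain J b where s2: "s2 = Some (J, b)" by fastforce
  have "realization_on g T2 (infosets g T2) (\<lambda>t. \<xi> (None, t))"
    using VSF_marginal_T2[OF assms(1)] .
  moreover have "\<xi> (s1, Some (J', b')) = 0"
    if "J' \<in> {J \<in> infosets g T2. rel_seq_is g s1 J}" "b' \<in> acts_is g T2 J'" "\<xi> (None, Some (J', b')) = 0"
    for J' b'
    using VSF_eq_zero_of_column_root[OF assms(1) _ that(3)] that(1,2) relpairs_seqs[OF assms(2)]
    by (simp add: relpairs_Some_T2_iff)
  ultimately show ?thesis
    using realization_on_eq_root_of_full_mass[OF _ _ _ parseq_closed_rel_seq_is VSF_row_realization[OF assms(1)]]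
      assms s2 by (simp add: VSF_def relpairs_Some_T2_iff)
qed (use assms in simp)

lemma VSF_eq_column_root_of_row_root_one:
  assumes "\<xi> \<in> VSF g" "(s1, s2) \<in> relpairs g" "\<xi> (s1, None) = 1"
  shows "\<xi> (s1, s2) = \<xi> (None, s2)"
proof (cases s1)
  case (Some Ia)
  then obtain I a where s1: "s1 = Some (I, a)" by fastforce
  have "realization_on g T1 (infosets g T1) (\<lambda>s. \<xi> (s, None))"
    using VSF_marginal_T1[OF assms(1)] .
  moreover have "\<xi> (Some (I', a'), s2) = 0"
    if "I' \<in> {I \<in> infosets g T1. rel_is_seq g I s2}" "a' \<in> acts_is g T1 I'" "\<xi> (Some (I', a'), None) = 0"
    for I' a'
    using VSF_eq_zero_of_row_root[OF assms(1) _ that(3)] that(1,2) relpairs_seqs[OF assms(2)]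
    by (simp add: relpairs_Some_T1_iff)
  ultimately show ?thesis
    using realization_on_eq_root_of_full_mass[OF _ _ _ parseq_closed_rel_is_seq VSF_column_realization[OF assms(1)]]
      assms s1 by (simp add: VSF_def relpairs_Some_T1_iff)
qed (use assms in simp)

lemma Xi_star_T1_product:
  assumes "\<xi> \<in> Xi_star_T1 g" "(s1, s2) \<in> relpairs g"
  shows "\<xi> (s1, s2) = \<xi> (s1, None) * \<xi> (None, s2)"
proof -
  have "\<xi> \<in> VSF g" "\<xi> (None, s2) \<in> {0, 1}"
    using assms by (auto simp: Xi_star_T1_def relpairs_def)
  then show ?thesis
    using VSF_eq_zero_of_column_root VSF_eq_row_root_of_column_root_one assms(2) by auto
qed

lemma Xi_star_T2_product:
  assumes "\<xi> \<in> Xi_star_T2 g" "(s1, s2) \<in> relpairs g"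
  shows "\<xi> (s1, s2) = \<xi> (s1, None) * \<xi> (None, s2)"
proof -
  have "\<xi> \<in> VSF g" "\<xi> (s1, None) \<in> {0, 1}"
    using assms by (auto simp: Xi_star_T2_def relpairs_def)
  then show ?thesis
    using VSF_eq_zero_of_row_root VSF_eq_column_root_of_row_root_one assms(2) by auto
qed

end

section \<open>Product correlation plans and convex hulls\<close>

definition product_cvec :: "('a, 'i) efg \<Rightarrow> (('i \<times> 'a) option \<Rightarrow> real) \<Rightarrow> (('i \<times> 'a) option \<Rightarrow> real) \<Rightarrow> ('i, 'a) cvec" where
  "product_cvec g x y = (\<lambda>(s1, s2). if (s1, s2) \<in> relpairs g then x s1 * y s2 else 0)"

lemma fmap_relpairs:
  "(s1, s2) \<in> relpairs g \<Longrightarrow> fmap g \<mu> (s1, s2) = (\<Sum>z \<in> plans_of g T1 s1 \<times> plans_of g T2 s2. \<mu> z)"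
  unfolding fmap_def by (simp add: sum.cartesian_product)

lemma fmap_outside: "q \<notin> relpairs g \<Longrightarrow> fmap g \<mu> q = 0"
  unfolding fmap_def by (cases q) auto

lemma fmap_convex_combination:
  "fmap g (\<lambda>z. \<Sum>j<k. c j * m j z) q = (\<Sum>j<k. c j * fmap g (m j) q)"
proof (cases "q \<in> relpairs g")
  case True
  obtain s1 s2 where q: "q = (s1, s2)" by fastforce
  show ?thesis
    unfolding q fmap_relpairs[OF True[unfolded q]] sum_distrib_left by (rule sum.swap)
qed (simp add: fmap_outside)

lemma Delta_T_nonneg: "\<mu> \<in> Delta_T g \<Longrightarrow> 0 \<le> \<mu> z"
  unfolding Delta_T_def by blast

lemma Delta_T_convex_combination:
  assumes "\<And>j. j < k \<Longrightarrow> 0 \<le> c j \<and> m j \<in> Delta_T g" "(\<Sum>j<k. c j) = 1"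
  shows "(\<lambda>z. \<Sum>j<k. c j * m j z) \<in> Delta_T g"
proof -
  have "(\<Sum>z \<in> rnf_plans g T1 \<times> rnf_plans g T2. \<Sum>j<k. c j * m j z) =
      (\<Sum>j<k. c j * (\<Sum>z \<in> rnf_plans g T1 \<times> rnf_plans g T2. m j z))"
    unfolding sum_distrib_left by (rule sum.swap)
  also have "\<dots> = 1" using assms by (simp add: Delta_T_def)
  finally show ?thesis using assms by (auto simp: Delta_T_def intro!: sum_nonneg)
qed

lemma conv_Xi_T_subset: "conv (Xi_T g) \<subseteq> Xi_T g"
proof
  fix \<xi> assume "\<xi> \<in> conv (Xi_T g)"
  then obtain k c p where cp: "\<forall>j<(k::nat). 0 \<le> c j \<and> p j \<in> Xi_T g" "(\<Sum>j<k. c j) = 1"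
    and \<xi>: "\<xi> = (\<lambda>q. \<Sum>j<k. c j * p j q)"
    unfolding conv_def by blast
  have "\<forall>j. \<exists>\<mu>. j < k \<longrightarrow> \<mu> \<in> Delta_T g \<and> p j = fmap g \<mu>"
    using cp(1) unfolding Xi_T_def by blast
  then obtain m where m: "\<And>j. j < k \<Longrightarrow> m j \<in> Delta_T g \<and> p j = fmap g (m j)"
    by metis
  have "\<xi> = fmap g (\<lambda>z. \<Sum>j<k. c j * m j z)"
    unfolding \<xi> fmap_convex_combination using m by (intro ext sum.cong) auto
  moreover have "(\<lambda>z. \<Sum>j<k. c j * m j z) \<in> Delta_T g"
    using cp m by (intro Delta_T_convex_combination) auto
  ultimately show "\<xi> \<in> Xi_T g" unfolding Xi_T_def by blast
qed

lemma conv_mono: "S \<subseteq> T \<Longrightarrow> conv S \<subseteq> conv T"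
  unfolding conv_def by blast

context perfect_recall_game
begin

lemma relpairs_parseq_T1:
  assumes "I \<in> infosets g T1" "s2 \<in> seqs g T2" "rel_is_seq g I s2"
  shows "(parseq g T1 I, s2) \<in> relpairs g"
proof -
  have "T1 \<noteq> Chance" by simp
  show ?thesis
  proof (cases rule: parseq_cases[OF \<open>T1 \<noteq> Chance\<close> assms(1)])
    case (2 I' a')
    have "I' \<in> {I \<in> infosets g T1. rel_is_seq g I s2}"
      using parseq_closed_rel_is_seq[of s2] assms 2(1) unfolding parseq_closed_def by blast
    then show ?thesis using 2 assms(2) by (simp add: relpairs_Some_T1_iff)
  qed (use assms in \<open>simp_all add: relpairs_None_iff\<close>)
qed

lemma relpairs_parseq_T2:
  assumes "J \<in> infosets g T2" "s1 \<in> seqs g T1" "rel_seq_is g s1 J"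
  shows "(s1, parseq g T2 J) \<in> relpairs g"
proof -
  have "T2 \<noteq> Chance" by simp
  show ?thesis
  proof (cases rule: parseq_cases[OF \<open>T2 \<noteq> Chance\<close> assms(1)])
    case (2 J' b')
    have "J' \<in> {J \<in> infosets g T2. rel_seq_is g s1 J}"
      using parseq_closed_rel_seq_is[of s1] assms 2(1) unfolding parseq_closed_def by blast
    then show ?thesis using 2 assms(2) by (simp add: relpairs_Some_T2_iff)
  qed (use assms in \<open>simp_all add: relpairs_None_iff\<close>)
qed

lemma product_cvec_in_VSF:
  assumes x: "realization_on g T1 (infosets g T1) x" "x None = 1"
    and y: "realization_on g T2 (infosets g T2) y" "y None = 1"
  shows "product_cvec g x y \<in> VSF g"
  unfolding VSF_def
proof (intro CollectI conjI ballI allI impI)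
  fix I s2 assume I: "I \<in> infosets g T1" "s2 \<in> seqs g T2" "rel_is_seq g I s2"
  have "(\<Sum>a\<in>acts_is g T1 I. product_cvec g x y (Some (I, a), s2)) = (\<Sum>a\<in>acts_is g T1 I. x (Some (I, a))) * y s2"
    using I by (simp add: product_cvec_def relpairs_Some_T1_iff sum_distrib_right)
  then show "(\<Sum>a\<in>acts_is g T1 I. product_cvec g x y (Some (I, a), s2)) = product_cvec g x y (parseq g T1 I, s2)"
    using x(1) I relpairs_parseq_T1[OF I] by (simp add: realization_on_def product_cvec_def)
next
  fix J s1 assume J: "J \<in> infosets g T2" "s1 \<in> seqs g T1" "rel_seq_is g s1 J"
  have "(\<Sum>b\<in>acts_is g T2 J. product_cvec g x y (s1, Some (J, b))) = x s1 * (\<Sum>b\<in>acts_is g T2 J. y (Some (J, b)))"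
    using J by (simp add: product_cvec_def relpairs_Some_T2_iff sum_distrib_left)
  then show "(\<Sum>b\<in>acts_is g T2 J. product_cvec g x y (s1, Some (J, b))) = product_cvec g x y (s1, parseq g T2 J)"
    using y(1) J relpairs_parseq_T2[OF J] by (simp add: realization_on_def product_cvec_def)
next
  fix q assume "q \<in> relpairs g"
  then show "0 \<le> product_cvec g x y q"
    using realization_on_nonneg[OF x(1)] realization_on_nonneg[OF y(1)] x(2) y(2)
    by (auto simp: product_cvec_def relpairs_def)
qed (auto simp: product_cvec_def relpairs_None_iff seqs_def x(2) y(2))

lemma product_cvec_in_Xi_T:
  assumes x: "realization_on g T1 (infosets g T1) x" "x None = 1"
    and y: "realization_on g T2 (infosets g T2) y" "y None = 1"
  shows "product_cvec g x y \<in> Xi_T g"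
proof -
  obtain p1 where p1: "\<And>\<pi>. 0 \<le> p1 \<pi>" "\<And>\<pi>. \<pi> \<notin> rnf_plans g T1 \<Longrightarrow> p1 \<pi> = 0"
    "\<And>s. s \<in> seqs g T1 \<Longrightarrow> x s = (\<Sum>\<pi>\<in>plans_of g T1 s. p1 \<pi>)"
    using realization_on_plan_mixture[of T1 x] x by auto
  obtain p2 where p2: "\<And>\<pi>. 0 \<le> p2 \<pi>" "\<And>\<pi>. \<pi> \<notin> rnf_plans g T2 \<Longrightarrow> p2 \<pi> = 0"
    "\<And>s. s \<in> seqs g T2 \<Longrightarrow> y s = (\<Sum>\<pi>\<in>plans_of g T2 s. p2 \<pi>)"
    using realization_on_plan_mixture[of T2 y] y by auto
  define \<mu> where "\<mu> z = p1 (fst z) * p2 (snd z)" for z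
  have sum_\<mu>: "(\<Sum>z \<in> A \<times> B. \<mu> z) = (\<Sum>\<pi>\<in>A. p1 \<pi>) * (\<Sum>\<pi>\<in>B. p2 \<pi>)" for A B
    unfolding \<mu>_def by (simp add: sum_product sum.cartesian_product split_beta)
  have "\<mu> \<in> Delta_T g"
    using p1 p2 x(2) y(2) sum_\<mu>[of "rnf_plans g T1" "rnf_plans g T2"]
    by (auto simp: Delta_T_def \<mu>_def seqs_def plans_of_def)
  moreover have "fmap g \<mu> = product_cvec g x y"
  proof
    fix q show "fmap g \<mu> q = product_cvec g x y q"
    proof (cases "q \<in> relpairs g")
      case True
      obtain s1 s2 where q: "q = (s1, s2)" by fastforce
      show ?thesis
        using True relpairs_seqs[OF True[unfolded q]] p1(3) p2(3)
        by (simp add: q fmap_relpairs sum_\<mu> product_cvec_def)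
    qed (cases q, simp add: fmap_outside product_cvec_def)
  qed
  ultimately show ?thesis unfolding Xi_T_def by (metis image_eqI)
qed

lemma VSF_eq_product_cvec:
  assumes "\<xi> \<in> VSF g" "\<And>s1 s2. (s1, s2) \<in> relpairs g \<Longrightarrow> \<xi> (s1, s2) = \<xi> (s1, None) * \<xi> (None, s2)"
  shows "\<xi> = product_cvec g (\<lambda>s. \<xi> (s, None)) (\<lambda>t. \<xi> (None, t))"
proof
  fix q show "\<xi> q = product_cvec g (\<lambda>s. \<xi> (s, None)) (\<lambda>t. \<xi> (None, t)) q"
    using assms by (cases q) (auto simp: product_cvec_def VSF_def)
qed

lemma Xi_star_subset_Xi_T: "Xi_star_T1 g \<union> Xi_star_T2 g \<subseteq> Xi_T g"
proof
  fix \<xi> assume \<xi>: "\<xi> \<in> Xi_star_T1 g \<union> Xi_star_T2 g"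
  then have VSF: "\<xi> \<in> VSF g" by (auto simp: Xi_star_T1_def Xi_star_T2_def)
  then have "\<xi> = product_cvec g (\<lambda>s. \<xi> (s, None)) (\<lambda>t. \<xi> (None, t))"
    using \<xi> Xi_star_T1_product Xi_star_T2_product by (intro VSF_eq_product_cvec) auto
  also have "\<dots> \<in> Xi_T g"
    using VSF by (intro product_cvec_in_Xi_T VSF_marginal_T1 VSF_marginal_T2) (simp_all add: VSF_def)
  finally show "\<xi> \<in> Xi_T g" .
qed

lemma fmap_point_mass:
  assumes "\<pi>1 \<in> rnf_plans g T1" "\<pi>2 \<in> rnf_plans g T2"
  shows "fmap g (indicator {(\<pi>1, \<pi>2)}) =
    product_cvec g (\<lambda>s. of_bool (\<pi>1 \<in> plans_of g T1 s)) (\<lambda>t. of_bool (\<pi>2 \<in> plans_of g T2 t))"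
proof
  fix q show "fmap g (indicator {(\<pi>1, \<pi>2)}) q =
    product_cvec g (\<lambda>s. of_bool (\<pi>1 \<in> plans_of g T1 s)) (\<lambda>t. of_bool (\<pi>2 \<in> plans_of g T2 t)) q"
  proof (cases "q \<in> relpairs g")
    case True
    obtain s1 s2 where q: "q = (s1, s2)" by fastforce
    have "(\<Sum>z\<in>plans_of g T1 s1 \<times> plans_of g T2 s2. indicator {(\<pi>1, \<pi>2)} z) =
        (\<Sum>z\<in>plans_of g T1 s1 \<times> plans_of g T2 s2. if z = (\<pi>1, \<pi>2) then 1 else (0::real))"
      by (intro sum.cong) (auto simp: indicator_def)
    then show ?thesis
      using True by (simp add: q fmap_relpairs product_cvec_def finite_plans_of)
  qed (cases q, simp add: fmap_outside product_cvec_def)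
qed

lemma point_mass_in_Xi_star:
  assumes "z \<in> rnf_plans g T1 \<times> rnf_plans g T2"
  shows "fmap g (indicator {z}) \<in> Xi_star_T1 g \<inter> Xi_star_T2 g"
proof -
  obtain \<pi>1 \<pi>2 where z: "z = (\<pi>1, \<pi>2)" "\<pi>1 \<in> rnf_plans g T1" "\<pi>2 \<in> rnf_plans g T2"
    using assms by blast
  let ?x = "\<lambda>s. of_bool (\<pi>1 \<in> plans_of g T1 s) :: real"
  let ?y = "\<lambda>t. of_bool (\<pi>2 \<in> plans_of g T2 t) :: real"
  have x: "realization_on g T1 (infosets g T1) ?x" "?x None = 1"
    using realization_on_plan_indicator z by (simp_all add: plans_of_def)
  have y: "realization_on g T2 (infosets g T2) ?y" "?y None = 1"
    using realization_on_plan_indicator z by (simp_all add: plans_of_def)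
  have "product_cvec g ?x ?y \<in> VSF g" using product_cvec_in_VSF[OF x y] .
  moreover have "\<forall>s2\<in>seqs g T2. product_cvec g ?x ?y (None, s2) \<in> {0, 1}"
    using x(2) by (simp add: product_cvec_def relpairs_None_iff)
  moreover have "\<forall>s1\<in>seqs g T1. product_cvec g ?x ?y (s1, None) \<in> {0, 1}"
    using y(2) by (simp add: product_cvec_def relpairs_None_iff)
  ultimately show ?thesis
    unfolding z(1) fmap_point_mass[OF z(2,3)] Xi_star_T1_def Xi_star_T2_def by blast
qed

lemma Xi_T_subset_conv:
  assumes "\<And>z. z \<in> rnf_plans g T1 \<times> rnf_plans g T2 \<Longrightarrow> fmap g (indicator {z}) \<in> S"
  shows "Xi_T g \<subseteq> conv S"
proof
  fix \<xi> assume "\<xi> \<in> Xi_T g"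
  then obtain \<mu> where \<mu>: "\<mu> \<in> Delta_T g" "\<xi> = fmap g \<mu>" unfolding Xi_T_def by blast
  let ?A = "rnf_plans g T1 \<times> rnf_plans g T2"
  have "finite ?A" by (simp add: finite_rnf_plans)
  from ex_bij_betw_nat_finite[OF this] obtain h where h: "bij_betw h {..<card ?A} ?A"
    unfolding atLeast0LessThan by blast
  have reindex: "(\<Sum>j<card ?A. f (h j)) = (\<Sum>z\<in>?A. f z)" for f :: "_ \<Rightarrow> real"
    using sum.reindex_bij_betw[OF h] .
  have "\<mu> = (\<lambda>w. \<Sum>j<card ?A. \<mu> (h j) * indicator {h j} w)"
  proof
    fix w
    have "(\<Sum>z\<in>?A. \<mu> z * indicator {z} w) = (\<Sum>z\<in>?A. if z = w then \<mu> z else 0)"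
      by (intro sum.cong) (auto simp: indicator_def)
    moreover have "w \<notin> ?A \<Longrightarrow> \<mu> w = 0" using \<mu>(1) unfolding Delta_T_def by blast
    ultimately show "\<mu> w = (\<Sum>j<card ?A. \<mu> (h j) * indicator {h j} w)"
      using \<open>finite ?A\<close> reindex[of "\<lambda>z. \<mu> z * indicator {z} w"] by (cases "w \<in> ?A") simp_all
  qed
  then have "fmap g \<mu> = fmap g (\<lambda>w. \<Sum>j<card ?A. \<mu> (h j) * indicator {h j} w)"
    by (rule arg_cong)
  then have "\<xi> = (\<lambda>q. \<Sum>j<card ?A. \<mu> (h j) * fmap g (indicator {h j}) q)"
    unfolding \<mu>(2) fmap_convex_combination[symmetric] .
  moreover have "0 \<le> \<mu> (h j) \<and> fmap g (indicator {h j}) \<in> S" if "j < card ?A" for j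
  proof -
    have "h j \<in> ?A" using h that by (simp add: bij_betw_apply)
    then show ?thesis using Delta_T_nonneg[OF \<mu>(1)] assms by simp
  qed
  moreover have "(\<Sum>j<card ?A. \<mu> (h j)) = 1" using \<mu>(1) reindex[of \<mu>] unfolding Delta_T_def by simp
  ultimately show "\<xi> \<in> conv S"
    unfolding conv_def
    by (intro CollectI exI[of _ "card ?A"] exI[of _ "\<lambda>j. \<mu> (h j)"] exI[of _ "\<lambda>j. fmap g (indicator {h j})"]) blast
qed

end

theorem proposition3:
  fixes g :: "('a, 'i) efg"
  assumes "wf_game g" and "perfect_recall g"
  shows "Xi_T g = conv (Xi_star_T1 g) \<and> Xi_T g = conv (Xi_star_T2 g) \<and>
         Xi_T g = conv (Xi_star_T1 g \<union> Xi_star_T2 g)"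
proof -
  interpret perfect_recall_game g
    using assms by (intro perfect_recall_game.intro game.intro perfect_recall_game_axioms.intro)
  have "Xi_T g \<subseteq> conv (Xi_star_T1 g \<inter> Xi_star_T2 g)"
    using point_mass_in_Xi_star by (intro Xi_T_subset_conv)
  moreover have "conv (Xi_star_T1 g \<union> Xi_star_T2 g) \<subseteq> Xi_T g"
    using conv_mono[OF Xi_star_subset_Xi_T] conv_Xi_T_subset by blast
  moreover have "conv (Xi_star_T1 g \<inter> Xi_star_T2 g) \<subseteq> conv (Xi_star_T1 g)"
    "conv (Xi_star_T1 g \<inter> Xi_star_T2 g) \<subseteq> conv (Xi_star_T2 g)"
    "conv (Xi_star_T1 g) \<subseteq> conv (Xi_star_T1 g \<union> Xi_star_T2 g)"
    "conv (Xi_star_T2 g) \<subseteq> conv (Xi_star_T1 g \<union> Xi_star_T2 g)"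
    by (intro conv_mono; blast)+
  ultimately show ?thesis by blast
qed

end
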